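(* For every integer $n\ge2$, \[ \sum_{j=0}^{n}B_j=\mathbb{B}_n^{(2)}(1)+B_n-\mathbb{B}_n^{(2)}-1 . \]
   Context: $B_j$ is the $j$th Bernoulli number ($\frac{t}{e^t-1}=\sum_{m\ge0}B_m\frac{t^m}{m!}$). The poly-Bernoulli polynomials are defined by $\sum_{n\ge0}\mathbb{B}_n^{(p)}(x)\frac{t^n}{n!}=\frac{\mathrm{Li}_p(1-e^{-t})}{1-e^{-t}}e^{xt}$ with $\mathrm{Li}_p(z)=\sum_{m\ge1}z^m/m^p$; $\mathbb{B}_n^{(2)}(x)$ is the di-Bernoulli polynomial and $\mathbb{B}_n^{(2)}=\mathbb{B}_n^{(2)}(0)$ the di-Bernoulli number. *)

theory Defs
  imports "HOL-Computational_Algebra.Formal_Power_Series"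
begin

definition bernoulli_egf :: "real fps" where
  "bernoulli_egf = fps_X / (fps_exp 1 - 1)"

definition bernoulli_num :: "nat \<Rightarrow> real" where
  "bernoulli_num m = fact m * fps_nth bernoulli_egf m"

definition polylog_fps :: "nat \<Rightarrow> real fps" where
  "polylog_fps p = Abs_fps (\<lambda>m. if m = 0 then 0 else 1 / (real m) ^ p)"

definition poly_bernoulli_egf :: "nat \<Rightarrow> real \<Rightarrow> real fps" where
  "poly_bernoulli_egf p x =
     (fps_compose (polylog_fps p) (1 - fps_exp (-1)) / (1 - fps_exp (-1))) * fps_exp x"

definition poly_bernoulli_poly :: "nat \<Rightarrow> nat \<Rightarrow> real \<Rightarrow> real" where
  "poly_bernoulli_poly p n x = fact n * fps_nth (poly_bernoulli_egf p x) n"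

end

theory Submission imports Defs begin

text \<open>With \<open>u = 1 - exp(-t)\<close> we have \<open>Li_1(u) = t\<close> and \<open>z Li_2'(z) = Li_1(z)\<close>, so by the
  chain rule \<open>(Li_2(u))' = t exp(-t) / u = t / (exp t - 1)\<close>: \<open>Li_2(u)\<close> integrates the generating
  function of the Bernoulli numbers. The generating functions at \<open>x = 1\<close> and \<open>x = 0\<close> differ
  by \<open>Li_2(u) / u * (exp t - 1) = Li_2(u) exp t\<close>, whose \<open>n\<close>-th coefficient is
  \<open>\<Sum>j<n. (n choose j+1) B_j\<close>; Pascal's rule and the recurrence \<open>\<Sum>k<n. (n choose k) B_k = [n = 1]\<close>
  reduce this to \<open>\<Sum>j<n. B_j + 1\<close> when \<open>n \<ge> 2\<close>.\<close>

unbundle fps_syntax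

lemma fps_exp_mult_fps_exp_neg: "fps_exp c * fps_exp (- c) = (1 :: 'a::field_char_0 fps)"
  by (simp flip: fps_exp_add_mult)

lemma fps_X_mult_deriv_polylog_fps: "fps_X * fps_deriv (polylog_fps (Suc p)) = polylog_fps p"
  by (rule fps_ext) (auto simp: polylog_fps_def field_simps of_nat_diff)

lemma one_minus_fps_X_mult_deriv_polylog_fps_1: "(1 - fps_X) * fps_deriv (polylog_fps 1) = 1"
proof -
  have "fps_deriv (polylog_fps 1) = Abs_fps (\<lambda>_. 1)"
    by (rule fps_ext) (simp add: polylog_fps_def field_simps del: of_nat_Suc)
  then show ?thesis by (intro fps_ext) (simp add: algebra_simps)
qed

lemma fps_deriv_one_minus_fps_exp_neg_1: "fps_deriv (1 - fps_exp (-1)) = fps_exp (-1::real)"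
  by (rule fps_ext) simp

lemma polylog_fps_1_compose_one_minus_fps_exp:
  "polylog_fps 1 oo (1 - fps_exp (-1)) = fps_X"
proof -
  let ?u = "1 - fps_exp (-1::real)"
  have u0: "?u $ 0 = 0" by simp
  have "((1 - fps_X) oo ?u) * (fps_deriv (polylog_fps 1) oo ?u) = 1"
    using arg_cong[OF one_minus_fps_X_mult_deriv_polylog_fps_1, of "\<lambda>f. f oo ?u"]
    by (simp add: fps_compose_mult_distrib)
  moreover have "(1 - fps_X) oo ?u = fps_exp (-1)"
    by (simp add: fps_compose_sub_distrib)
  moreover have "fps_deriv (polylog_fps 1 oo ?u) = (fps_deriv (polylog_fps 1) oo ?u) * fps_exp (-1)"
    using fps_compose_deriv[OF u0, of "polylog_fps 1"]
    by (simp only: fps_deriv_one_minus_fps_exp_neg_1)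
  ultimately have "fps_deriv (polylog_fps 1 oo ?u) = fps_deriv fps_X"
    by (simp add: mult.commute)
  then have "polylog_fps 1 oo ?u = fps_const ((polylog_fps 1 oo ?u) $ 0 - fps_X $ 0) + fps_X"
    by (simp only: fps_deriv_eq_iff)
  then show ?thesis
    by (simp add: polylog_fps_def)
qed

lemma bernoulli_egf_mult: "bernoulli_egf * (fps_exp 1 - 1) = fps_X"
  unfolding bernoulli_egf_def
  by (rule fps_times_divide_eq) (auto intro: subdegree_leI)

lemma fps_exp_1_minus_1_eq: "fps_exp (1::real) - 1 = (1 - fps_exp (-1)) * fps_exp 1"
  using fps_exp_mult_fps_exp_neg[of "1::real"] by (simp add: algebra_simps)

lemma fps_deriv_polylog_fps_2_compose:
  "fps_deriv (polylog_fps 2 oo (1 - fps_exp (-1))) = bernoulli_egf"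
proof -
  let ?u = "1 - fps_exp (-1::real)" and ?D = "fps_deriv (polylog_fps 2)"
  have u0: "?u $ 0 = 0" by simp
  have uD: "?u * (?D oo ?u) = fps_X"
  proof -
    have "(fps_X oo ?u) * (?D oo ?u) = polylog_fps 1 oo ?u"
      using arg_cong[OF fps_X_mult_deriv_polylog_fps[of 1], of "\<lambda>f. f oo ?u"]
      by (simp add: fps_compose_mult_distrib numeral_2_eq_2)
    then show ?thesis
      using u0 polylog_fps_1_compose_one_minus_fps_exp by simp
  qed
  have "fps_deriv (polylog_fps 2 oo ?u) = (?D oo ?u) * fps_exp (-1)"
    using fps_compose_deriv[OF u0, of "polylog_fps 2"]
    by (simp only: fps_deriv_one_minus_fps_exp_neg_1)
  then have "fps_deriv (polylog_fps 2 oo ?u) * (fps_exp 1 - 1)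
      = (?u * (?D oo ?u)) * (fps_exp 1 * fps_exp (-1))"
    unfolding fps_exp_1_minus_1_eq by (simp only: mult_ac)
  also have "\<dots> = bernoulli_egf * (fps_exp 1 - 1)"
    unfolding uD fps_exp_mult_fps_exp_neg bernoulli_egf_mult by simp
  finally show ?thesis
    by simp
qed

lemma fact_mult_polylog_fps_2_compose_nth:
  "fact (Suc k) * (polylog_fps 2 oo (1 - fps_exp (-1))) $ Suc k = bernoulli_num k"
  using arg_cong[OF fps_deriv_polylog_fps_2_compose, of "\<lambda>f. f $ k"]
  unfolding bernoulli_num_def by (simp add: field_simps del: of_nat_Suc)

lemma fact_mult_fps_exp_1_nth:
  fixes F :: "'a::field_char_0 fps"
  shows "fact n * (F * fps_exp 1) $ n = (\<Sum>i\<le>n. of_nat (n choose i) * (fact i * F $ i))"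
proof -
  have "fact n * (F * fps_exp 1) $ n = (\<Sum>i\<le>n. fact n * (F $ i / fact (n - i)))"
    by (simp add: fps_mult_nth sum_distrib_left atLeast0AtMost)
  also have "\<dots> = (\<Sum>i\<le>n. of_nat (n choose i) * (fact i * F $ i))"
    by (intro sum.cong refl) (simp add: binomial_fact divide_simps)
  finally show ?thesis .
qed

lemma bernoulli_num_recurrence:
  "(\<Sum>k<n. real (n choose k) * bernoulli_num k) = (if n = 1 then 1 else 0)"
proof -
  have "bernoulli_egf * fps_exp 1 = bernoulli_egf + fps_X"
    using bernoulli_egf_mult by (simp add: algebra_simps)
  then have "fact n * (bernoulli_egf * fps_exp 1) $ n = bernoulli_num n + (if n = 1 then 1 else 0)"
    by (simp add: bernoulli_num_def distrib_left)
  moreover have "fact n * (bernoulli_egf * fps_exp 1) $ n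
      = (\<Sum>k<n. real (n choose k) * bernoulli_num k) + bernoulli_num n"
    by (simp add: fact_mult_fps_exp_1_nth bernoulli_num_def lessThan_Suc_atMost[symmetric])
  ultimately show ?thesis by simp
qed

lemma sum_binomial_Suc_mult_bernoulli_num:
  "(\<Sum>j<n. real (n choose Suc j) * bernoulli_num j)
     = (\<Sum>j<n. bernoulli_num j) + (if n \<ge> 2 then 1 else 0)"
proof (induction n)
  case 0
  then show ?case by simp
next
  case (Suc n)
  have "(\<Sum>j<Suc n. real (Suc n choose Suc j) * bernoulli_num j)
      = (\<Sum>j<Suc n. real (n choose j) * bernoulli_num j)
        + (\<Sum>j<n. real (n choose Suc j) * bernoulli_num j)"
    by (simp add: sum.distrib algebra_simps)
  also have "(\<Sum>j<Suc n. real (n choose j) * bernoulli_num j)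
      = (if n = 1 then 1 else 0) + bernoulli_num n"
    using bernoulli_num_recurrence[of n] by simp
  finally show ?case
    using Suc.IH by auto
qed

lemma poly_bernoulli_poly_1_minus_0:
  "poly_bernoulli_poly p n 1 - poly_bernoulli_poly p n 0
     = fact n * ((polylog_fps p oo (1 - fps_exp (-1))) * fps_exp 1) $ n"
proof -
  let ?u = "1 - fps_exp (-1::real)" and ?L = "polylog_fps p oo (1 - fps_exp (-1))"
  have "?L / ?u * ?u = ?L"
  proof (cases "?L = 0")
    case False
    have "?u \<noteq> 0"
      using fps_exp_1_minus_1_eq by (metis fps_exp_eq_1_iff mult_zero_left right_minus_eq one_neq_zero)
    moreover have "subdegree ?u = 1"
      by (rule subdegreeI) auto
    moreover have "subdegree ?L \<ge> 1"
      using False by (intro subdegree_geI) (auto simp: polylog_fps_def)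
    ultimately show ?thesis
      by (intro fps_times_divide_eq) auto
  qed simp
  then have "?L / ?u * (fps_exp 1 - 1) = ?L * fps_exp 1"
    unfolding fps_exp_1_minus_1_eq by (metis mult.assoc)
  then show ?thesis
    unfolding poly_bernoulli_poly_def poly_bernoulli_egf_def
    by (simp add: algebra_simps flip: right_diff_distrib)
qed

theorem corollary3:
  fixes n :: nat
  assumes "n \<ge> 2"
  shows "(\<Sum>j=0..n. bernoulli_num j) =
           poly_bernoulli_poly 2 n 1 + bernoulli_num n - poly_bernoulli_poly 2 n 0 - 1"
proof -
  let ?L = "polylog_fps 2 oo (1 - fps_exp (-1::real))"
  have "poly_bernoulli_poly 2 n 1 - poly_bernoulli_poly 2 n 0
      = (\<Sum>i\<le>n. real (n choose i) * (fact i * ?L $ i))"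
    by (simp add: poly_bernoulli_poly_1_minus_0 fact_mult_fps_exp_1_nth)
  also have "\<dots> = (\<Sum>j<n. real (n choose Suc j) * bernoulli_num j)"
    unfolding sum.atMost_shift fact_mult_polylog_fps_2_compose_nth
    by (simp add: polylog_fps_def)
  also have "\<dots> = (\<Sum>j<n. bernoulli_num j) + 1"
    using sum_binomial_Suc_mult_bernoulli_num[of n] assms by simp
  finally show ?thesis
    by (simp add: atLeast0AtMost lessThan_Suc_atMost[symmetric])
qed

end
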